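(* Let $C \subseteq \mathbb{F}_q^n$ be a linear code of dimension $k$ with minimum distance $d$, and let $(d_1,\dots,d_k)$ be its weight hierarchy. Assume that there is an integer $i$ with $1 \leqslant i < k$ such that \[ d_k = \frac{q^k-1}{q^{k-i}(q^i-1)}\, d_i. \] Then $C$ is a constant weight code, and the common weight of its non-zero codewords is $d_k\dfrac{q^{k-1}(q-1)}{q^k-1}$.
   Context: For a subcode $D \subseteq C$ (a linear subspace), $\mathrm{Supp}(D)=\{x\in\{1,\dots,n\} : \exists d\in D,\ d_x\neq 0\}$ and $w(D)=\#\mathrm{Supp}(D)$; the weight of a codeword $c$ is the weight of the subcode it spans. For $1\leqslant r\leqslant k$, the $r$-th generalized Hamming weight is $d_r=\min\{w(D) : D \subseteq C \text{ a subcode of dimension } r\}$; the weight hierarchy is $(d_1,\dots,d_k)$, and $d_1=d$. A constant weight code is a code all of whose non-zero codewords have the same weight. *)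

theory Defs
  imports Complex_Main "HOL-Library.Function_Algebras"
begin

text \<open>Ambient space: F_q^n is modelled as functions from a finite coordinate type 'n
  (with n = CARD('n)) to a finite field 'a (with q = CARD('a)).
  Scalar multiplication is pointwise.\<close>

definition cscale :: "'a::field \<Rightarrow> ('n \<Rightarrow> 'a) \<Rightarrow> ('n \<Rightarrow> 'a)" where
  "cscale c v = (\<lambda>x. c * v x)"

lemma vector_space_cscale: "vector_space (cscale :: 'a::field \<Rightarrow> ('n \<Rightarrow> 'a) \<Rightarrow> _)"
  by unfold_locales (auto simp: cscale_def fun_eq_iff algebra_simps)

abbreviation is_subspace :: "('n \<Rightarrow> 'a::field) set \<Rightarrow> bool" where
  "is_subspace S \<equiv> module.subspace cscale S"

abbreviation sdim :: "('n \<Rightarrow> 'a::field) set \<Rightarrow> nat" where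
  "sdim S \<equiv> vector_space.dim cscale S"

abbreviation sspan :: "('n \<Rightarrow> 'a::field) set \<Rightarrow> ('n \<Rightarrow> 'a) set" where
  "sspan S \<equiv> module.span cscale S"

definition Supp :: "('n \<Rightarrow> 'a::zero) set \<Rightarrow> 'n set" where
  "Supp D = {x. \<exists>d\<in>D. d x \<noteq> 0}"

definition wt :: "('n \<Rightarrow> 'a::zero) set \<Rightarrow> nat" where
  "wt D = card (Supp D)"

definition cw_weight :: "('n \<Rightarrow> 'a::field) \<Rightarrow> nat" where
  "cw_weight c = wt (sspan {c})"

definition ghw :: "('n \<Rightarrow> 'a::field) set \<Rightarrow> nat \<Rightarrow> nat" where
  "ghw C r = Min {wt D | D. D \<subseteq> C \<and> is_subspace D \<and> sdim D = r}"

definition constant_weight_code :: "('n \<Rightarrow> 'a::field) set \<Rightarrow> bool" where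
  "constant_weight_code C \<longleftrightarrow> (\<exists>w. \<forall>c\<in>C. c \<noteq> 0 \<longrightarrow> cw_weight c = w)"

end

theory Submission
  imports Defs
begin

text \<open>
  Write \<open>N\<close> for the support size of \<open>C\<close> and fix a \<open>j\<close>-dimensional subcode \<open>F\<close> of minimal support.
  Double counting the pairs \<open>(v, x)\<close> with \<open>v \<in> C - F\<close> and \<open>x \<in> Supp C - Supp F\<close> a zero of \<open>v\<close>,
  where for each \<open>x\<close> the zeros in \<open>C\<close> form a hyperplane containing \<open>F\<close>, and using that
  \<open>F + \<langle>v\<rangle>\<close> has support at least \<open>d\<^sub>j\<^sub>+\<^sub>1\<close>, shows that \<open>(N - d\<^sub>j) / (q\<^bsup>k-j\<^esup> - 1)\<close> is
  nondecreasing in \<open>j < k\<close>; it starts at \<open>N / (q\<^bsup>k\<^esup> - 1)\<close>.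
  The hypothesis says that its values at \<open>0\<close> and \<open>i\<close> agree, so it is constant on \<open>[0, i]\<close>,
  and equality at \<open>j = 1\<close> says that \<open>d\<^sub>1\<close> equals the average weight
  \<open>N q\<^bsup>k-1\<^esup>(q - 1) / (q\<^bsup>k\<^esup> - 1)\<close> of the nonzero codewords, which forces all of them to have weight \<open>d\<^sub>1\<close>.
\<close>

interpretation cs: vector_space "cscale :: 'a::field \<Rightarrow> ('n \<Rightarrow> 'a) \<Rightarrow> _"
  by (rule vector_space_cscale)

interpretation fd: finite_dimensional_vector_space "cscale :: 'a::{finite,field} \<Rightarrow> ('n::finite \<Rightarrow> 'a) \<Rightarrow> _"
  "SOME B. cs.independent B \<and> cs.span B = UNIV"
proof -
  have "\<exists>B :: ('n \<Rightarrow> 'a) set. cs.independent B \<and> cs.span B = UNIV"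
    using cs.basis_exists[of UNIV] by (metis top.extremum_uniqueI)
  from someI_ex[OF this] show "finite_dimensional_vector_space cscale
      (SOME B :: ('n \<Rightarrow> 'a) set. cs.independent B \<and> cs.span B = UNIV)"
    by unfold_locales auto
qed

lemma two_le_card_field: "2 \<le> card (UNIV :: 'a::{finite,field} set)"
  using card_mono[of "UNIV :: 'a set" "{0, 1}"] by simp

lemma card_span_insert:
  fixes S :: "('n::finite \<Rightarrow> 'a::{finite,field}) set"
  assumes "v \<notin> sspan S"
  shows "card (sspan (insert v S)) = card (UNIV :: 'a set) * card (sspan S)"
proof -
  let ?f = "\<lambda>(a, s). cscale a v + s"
  have "sspan (insert v S) = ?f ` (UNIV \<times> sspan S)"
  proof (intro equalityI subsetI)
    fix x assume "x \<in> sspan (insert v S)"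
    then obtain a where "x - cscale a v \<in> sspan S"
      unfolding cs.span_insert by blast
    then show "x \<in> ?f ` (UNIV \<times> sspan S)"
      by (intro image_eqI[of _ _ "(a, x - cscale a v)"]) auto
  next
    fix y assume "y \<in> ?f ` (UNIV \<times> sspan S)"
    then obtain a s where "y = cscale a v + s" "s \<in> sspan S"
      by auto
    moreover have "cscale a v \<in> sspan (insert v S)"
      by (simp add: cs.span_base cs.span_scale)
    ultimately show "y \<in> sspan (insert v S)"
      using cs.span_mono[of S "insert v S"] by (auto intro: cs.span_add)
  qed
  moreover have "inj_on ?f (UNIV \<times> sspan S)"
  proof (rule inj_onI, clarsimp)
    fix a b s t assume st: "s \<in> sspan S" "t \<in> sspan S" and eq: "cscale a v + s = cscale b v + t"
    have "a = b"
    proof (rule ccontr)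
      assume "a \<noteq> b"
      have "cscale (a - b) v = t - s"
        using eq by (simp add: cscale_def fun_eq_iff algebra_simps)
      then have "cscale (a - b) v \<in> sspan S"
        using st by (simp add: cs.span_diff)
      then have "cscale (inverse (a - b)) (cscale (a - b) v) \<in> sspan S"
        by (rule cs.span_scale)
      with \<open>a \<noteq> b\<close> assms show False
        by (simp add: cscale_def mult.assoc[symmetric])
    qed
    with eq show "a = b \<and> s = t" by simp
  qed
  ultimately show ?thesis
    by (simp add: card_image card_cartesian_product)
qed

lemma card_span_independent:
  fixes B :: "('n::finite \<Rightarrow> 'a::{finite,field}) set"
  shows "cs.independent B \<Longrightarrow> card (sspan B) = card (UNIV :: 'a set) ^ card B"
proof (induction B rule: finite_induct[OF finite])
  case (2 v B)
  then show ?case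
    using cs.independent_insert[of v B] card_span_insert[of v B] by simp
qed simp

lemma card_subspace:
  fixes S :: "('n::finite \<Rightarrow> 'a::{finite,field}) set"
  assumes "is_subspace S"
  shows "card S = card (UNIV :: 'a set) ^ sdim S"
proof -
  obtain B where "B \<subseteq> S" "cs.independent B" "S \<subseteq> sspan B" "card B = sdim S"
    using cs.basis_exists by blast
  with assms show ?thesis
    using card_span_independent[of B] cs.span_subspace[of B S] by simp
qed

lemma card_subspace_vanishing:
  fixes C :: "('n::finite \<Rightarrow> 'a::{finite,field}) set"
  assumes C: "is_subspace C" and x: "x \<in> Supp C"
  shows "card (UNIV :: 'a set) * card {v \<in> C. v x = 0} = card C"
proof -
  obtain c where c: "c \<in> C" "c x \<noteq> 0"
    using x unfolding Supp_def by auto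
  let ?K = "{v \<in> C. v x = 0}"
  let ?f = "\<lambda>(a, h). cscale a c + h"
  have image: "C = ?f ` (UNIV \<times> ?K)"
  proof (intro equalityI subsetI)
    fix v assume v: "v \<in> C"
    let ?a = "v x / c x"
    have "v - cscale ?a c \<in> ?K"
      using v c C by (simp add: cs.subspace_diff cs.subspace_scale) (simp add: cscale_def)
    then show "v \<in> ?f ` (UNIV \<times> ?K)"
      by (intro image_eqI[of _ _ "(?a, v - cscale ?a c)"]) auto
  qed (use C c in \<open>auto intro!: cs.subspace_add cs.subspace_scale\<close>)
  have inj: "inj_on ?f (UNIV \<times> ?K)"
  proof (rule inj_onI, clarsimp)
    fix a b h g assume "h x = 0" "g x = 0" and eq: "cscale a c + h = cscale b c + g"
    have "cscale a c x = cscale b c x"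
      using fun_cong[OF eq, of x] \<open>h x = 0\<close> \<open>g x = 0\<close> by simp
    then have "a = b"
      using c by (simp add: cscale_def)
    with eq show "a = b \<and> h = g" by simp
  qed
  have "card C = card (?f ` (UNIV \<times> ?K))"
    by (rule arg_cong[where f = card, OF image])
  also have "\<dots> = card (UNIV :: 'a set) * card ?K"
    using inj by (simp add: card_image card_cartesian_product)
  finally show ?thesis ..
qed

lemma Supp_mono: "D \<subseteq> C \<Longrightarrow> Supp D \<subseteq> Supp C"
  unfolding Supp_def by auto

lemma Supp_insert: "Supp (insert v S) = {x. v x \<noteq> 0} \<union> Supp S"
  unfolding Supp_def by auto

lemma Supp_span: "Supp (sspan S) = Supp (S :: ('n \<Rightarrow> 'a::field) set)"
proof
  show "Supp (sspan S) \<subseteq> Supp S"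
  proof
    fix x assume "x \<in> Supp (sspan S)"
    moreover have "sspan S \<subseteq> {g. g x = 0}" if "x \<notin> Supp S"
      using that by (intro cs.span_minimal) (auto simp: Supp_def cs.subspace_def cscale_def)
    ultimately show "x \<in> Supp S"
      unfolding Supp_def by blast
  qed
qed (intro Supp_mono cs.span_superset)

lemma wt_mono: "D \<subseteq> (C :: ('n::finite \<Rightarrow> 'a::zero) set) \<Longrightarrow> wt D \<le> wt C"
  unfolding wt_def by (intro card_mono[OF finite] Supp_mono)

lemma card_Supp_diff: "D \<subseteq> (C :: ('n::finite \<Rightarrow> 'a::zero) set) \<Longrightarrow> card (Supp C - Supp D) = wt C - wt D"
  unfolding wt_def by (simp add: card_Diff_subset Supp_mono)

lemma dim_insert_subspace:
  fixes F :: "('n::finite \<Rightarrow> 'a::{finite,field}) set"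
  assumes "is_subspace F" "v \<notin> F"
  shows "sdim (insert v F) = Suc (sdim F)"
proof -
  have "v \<notin> sspan F"
    using assms cs.span_eq_iff[of F] by metis
  then show ?thesis
    using fd.dim_insert[of v F] by simp
qed

lemma exists_subspace_dim:
  fixes C :: "('n::finite \<Rightarrow> 'a::{finite,field}) set"
  assumes C: "is_subspace C"
  shows "j \<le> sdim C \<Longrightarrow> \<exists>D \<subseteq> C. is_subspace D \<and> sdim D = j"
proof (induction j)
  case 0
  then show ?case
    using cs.subspace_0[OF C] by (intro exI[of _ "{0}"]) auto
next
  case (Suc j)
  then obtain D where D: "D \<subseteq> C" "is_subspace D" "sdim D = j"
    by auto
  moreover from D Suc.prems have "D \<noteq> C"
    by auto
  ultimately obtain v where "v \<in> C" "v \<notin> D"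
    by auto
  with C D show ?case
    using cs.span_minimal[of "insert v D" C] dim_insert_subspace[of D v]
    by (intro exI[of _ "sspan (insert v D)"]) auto
qed

lemma finite_weights: "finite {wt D | D. D \<subseteq> (C :: ('n::finite \<Rightarrow> 'a::zero) set) \<and> P D}"
  by (rule finite_subset[of _ "{..card (UNIV :: 'n set)}"]) (auto simp: wt_def card_mono)

lemma ghw_le:
  fixes C D :: "('n::finite \<Rightarrow> 'a::{finite,field}) set"
  assumes "D \<subseteq> C" "is_subspace D" "sdim D = r"
  shows "ghw C r \<le> wt D"
  unfolding ghw_def using assms by (intro Min_le[OF finite_weights]) auto

lemma ghw_attained:
  fixes C :: "('n::finite \<Rightarrow> 'a::{finite,field}) set"
  assumes "is_subspace C" "r \<le> sdim C"
  obtains D where "D \<subseteq> C" "is_subspace D" "sdim D = r" "wt D = ghw C r"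
proof -
  have "ghw C r \<in> {wt D | D. D \<subseteq> C \<and> is_subspace D \<and> sdim D = r}"
    unfolding ghw_def using exists_subspace_dim[OF assms]
    by (intro Min_in[OF finite_weights]) auto
  with that show ?thesis
    by auto
qed

lemma ghw_le_wt:
  fixes C :: "('n::finite \<Rightarrow> 'a::{finite,field}) set"
  assumes "is_subspace C" "r \<le> sdim C"
  shows "ghw C r \<le> wt C"
  using ghw_attained[OF assms] wt_mono by metis

lemma ghw_dim:
  fixes C :: "('n::finite \<Rightarrow> 'a::{finite,field}) set"
  assumes C: "is_subspace C"
  shows "ghw C (sdim C) = wt C"
proof -
  obtain D where "D \<subseteq> C" "is_subspace D" "sdim D = sdim C" "wt D = ghw C (sdim C)"
    using ghw_attained[OF C order_refl] .
  with C show ?thesis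
    using fd.subspace_dim_equal[of D C] by simp
qed

lemma ghw_0:
  fixes C :: "('n::finite \<Rightarrow> 'a::{finite,field}) set"
  assumes "is_subspace C"
  shows "ghw C 0 = 0"
  using ghw_le[of "{0}" C 0] cs.subspace_0[OF assms] by (simp add: wt_def Supp_def)

lemma ghw_1_le_cw_weight:
  fixes C :: "('n::finite \<Rightarrow> 'a::{finite,field}) set"
  assumes "is_subspace C" "c \<in> C" "c \<noteq> 0"
  shows "ghw C 1 \<le> cw_weight c"
  unfolding cw_weight_def using assms dim_insert_subspace[of "{}" c] cs.span_minimal[of "{c}" C]
  by (intro ghw_le) auto

lemma sum_card_Supp_diff_span_insert:
  fixes C F :: "('n::finite \<Rightarrow> 'a::{finite,field}) set"
  assumes C: "is_subspace C" and FC: "F \<subseteq> C"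
  shows "card (UNIV :: 'a set) * (\<Sum>v\<in>C - F. card (Supp C - Supp (sspan (insert v F))))
           = card (Supp C - Supp F) * (card C - card (UNIV :: 'a set) * card F)"
proof -
  let ?q = "card (UNIV :: 'a set)"
  let ?Z = "Supp C - Supp F"
  have zeros: "Supp C - Supp (sspan (insert v F)) = {x \<in> ?Z. v x = 0}" for v
    by (auto simp: Supp_span Supp_insert)
  have per_coordinate: "?q * card {v \<in> C - F. v x = 0} = card C - ?q * card F" if x: "x \<in> ?Z" for x
  proof -
    have "{v \<in> C - F. v x = 0} = {v \<in> C. v x = 0} - F" and "F \<subseteq> {v \<in> C. v x = 0}"
      using x FC by (auto simp: Supp_def)
    then have "card {v \<in> C - F. v x = 0} = card {v \<in> C. v x = 0} - card F"
      by (simp add: card_Diff_subset)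
    with x C show ?thesis
      by (simp add: card_subspace_vanishing right_diff_distrib')
  qed
  have "(\<Sum>v\<in>C - F. card {x \<in> ?Z. v x = 0}) = (\<Sum>x\<in>?Z. card {v \<in> C - F. v x = 0})"
    unfolding card_eq_sum by (simp only: sum.inter_filter[OF finite]) (rule sum.swap)
  then have "?q * (\<Sum>v\<in>C - F. card (Supp C - Supp (sspan (insert v F))))
               = (\<Sum>x\<in>?Z. ?q * card {v \<in> C - F. v x = 0})"
    by (simp only: zeros sum_distrib_left)
  also have "\<dots> = (\<Sum>x\<in>?Z. card C - ?q * card F)"
    by (rule sum.cong[OF refl per_coordinate])
  finally show ?thesis
    by simp
qed

lemma ghw_Suc_inequality:
  fixes C :: "('n::finite \<Rightarrow> 'a::{finite,field}) set"
  assumes C: "is_subspace C" and j: "j < sdim C"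
  shows "(wt C - ghw C j) * (card C - card (UNIV :: 'a set) ^ Suc j)
           \<le> card (UNIV :: 'a set) * (card C - card (UNIV :: 'a set) ^ j) * (wt C - ghw C (Suc j))"
proof -
  let ?q = "card (UNIV :: 'a set)"
  obtain F where F: "F \<subseteq> C" "is_subspace F" "sdim F = j" "wt F = ghw C j"
    using ghw_attained[OF C, of j] j by auto
  have bound: "card (Supp C - Supp (sspan (insert v F))) \<le> wt C - ghw C (Suc j)" if v: "v \<in> C - F" for v
  proof -
    have "sspan (insert v F) \<subseteq> C"
      using C F(1) v by (intro cs.span_minimal) auto
    moreover have "ghw C (Suc j) \<le> wt (sspan (insert v F))"
      using calculation v F by (intro ghw_le) (auto simp: dim_insert_subspace)
    ultimately show ?thesis
      by (simp add: card_Supp_diff)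
  qed
  have "(wt C - ghw C j) * (card C - ?q ^ Suc j)
          = ?q * (\<Sum>v\<in>C - F. card (Supp C - Supp (sspan (insert v F))))"
    using sum_card_Supp_diff_span_insert[OF C F(1)] F card_subspace[of F]
    by (simp add: card_Supp_diff)
  also have "\<dots> \<le> ?q * (card (C - F) * (wt C - ghw C (Suc j)))"
    using sum_bounded_above[of "C - F", OF bound] by simp
  also have "card (C - F) = card C - ?q ^ j"
    using F card_subspace[of F] by (simp add: card_Diff_subset)
  finally show ?thesis
    by (simp add: mult.assoc)
qed

definition ghw_defect_ratio :: "('n::finite \<Rightarrow> 'a::{finite,field}) set \<Rightarrow> nat \<Rightarrow> real" where
  "ghw_defect_ratio C j =
     (real (wt C) - real (ghw C j)) / (real (card (UNIV :: 'a set)) ^ (sdim C - j) - 1)"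

lemma ghw_defect_ratio_le_Suc:
  fixes C :: "('n::finite \<Rightarrow> 'a::{finite,field}) set"
  assumes C: "is_subspace C" and j: "Suc j < sdim C"
  shows "ghw_defect_ratio C j \<le> ghw_defect_ratio C (Suc j)"
proof -
  let ?q = "card (UNIV :: 'a set)" and ?k = "sdim C"
  let ?Q = "real ?q"
  let ?m = "\<lambda>j. real (wt C) - real (ghw C j)"
  have q: "2 \<le> ?Q"
    using two_le_card_field[where 'a = 'a] by simp
  have "?q ^ Suc j \<le> ?q ^ ?k" "?q ^ j \<le> ?q ^ ?k"
    using j two_le_card_field[where 'a = 'a] by (intro power_increasing; simp)+
  then have casts: "real (card C - ?q ^ Suc j) = ?Q ^ ?k - ?Q ^ Suc j"
    "real (card C - ?q ^ j) = ?Q ^ ?k - ?Q ^ j"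
    using card_subspace[OF C] by (simp_all add: of_nat_diff)
  have "ghw C j \<le> wt C" "ghw C (Suc j) \<le> wt C"
    using j ghw_le_wt[OF C] by auto
  then have "real ((wt C - ghw C j) * (card C - ?q ^ Suc j))
               \<le> real (?q * (card C - ?q ^ j) * (wt C - ghw C (Suc j)))
             \<longleftrightarrow> ?m j * (?Q ^ ?k - ?Q ^ Suc j) \<le> ?Q * (?Q ^ ?k - ?Q ^ j) * ?m (Suc j)"
    by (simp only: of_nat_mult casts of_nat_diff)
  then have "?m j * (?Q ^ ?k - ?Q ^ Suc j) \<le> ?Q * (?Q ^ ?k - ?Q ^ j) * ?m (Suc j)"
    using ghw_Suc_inequality[OF C, of j] j by (simp only: of_nat_le_iff Suc_lessD)
  moreover have "?Q ^ ?k = ?Q ^ Suc j * ?Q ^ (?k - Suc j)" "?Q ^ (?k - j) = ?Q * ?Q ^ (?k - Suc j)"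
    using j by (simp_all flip: power_add power_Suc add: Suc_diff_Suc)
  ultimately have "?Q ^ Suc j * (?m j * (?Q ^ (?k - Suc j) - 1))
                     \<le> ?Q ^ Suc j * ((?Q ^ (?k - j) - 1) * ?m (Suc j))"
    by (simp add: algebra_simps)
  then have "?m j * (?Q ^ (?k - Suc j) - 1) \<le> (?Q ^ (?k - j) - 1) * ?m (Suc j)"
    using q by simp
  moreover have "1 < ?Q ^ (?k - Suc j)" "1 < ?Q ^ (?k - j)"
    using j q by (auto intro: one_less_power)
  ultimately show ?thesis
    unfolding ghw_defect_ratio_def by (simp add: divide_simps mult.commute)
qed

lemma ghw_defect_ratio_mono:
  fixes C :: "('n::finite \<Rightarrow> 'a::{finite,field}) set"
  assumes C: "is_subspace C" and "a \<le> j" "j < sdim C"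
  shows "ghw_defect_ratio C a \<le> ghw_defect_ratio C j"
  using assms(2-)
proof (induction j rule: dec_induct)
  case (step j)
  then show ?case
    using ghw_defect_ratio_le_Suc[OF C, of j] by simp
qed simp

lemma cw_weight_eq_card: "cw_weight c = card {x. c x \<noteq> 0}"
  unfolding cw_weight_def wt_def Supp_span by (simp add: Supp_def)

lemma sum_cw_weight:
  fixes C :: "('n::finite \<Rightarrow> 'a::{finite,field}) set"
  assumes C: "is_subspace C"
  shows "card (UNIV :: 'a set) * (\<Sum>c\<in>C - {0}. cw_weight c)
           = wt C * (card (UNIV :: 'a set) - 1) * card C"
proof (cases "Supp C = {}")
  case True
  then have "cw_weight c = 0" if "c \<in> C" for c
    using that by (auto simp: cw_weight_eq_card Supp_def)
  with True show ?thesis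
    by (simp add: wt_def)
next
  case False
  let ?q = "card (UNIV :: 'a set)" and ?N = "wt C"
  let ?S = "\<Sum>c\<in>C - {0}. real (cw_weight c)"
  have le: "cw_weight c \<le> ?N" and diff: "card (Supp C - Supp (sspan (insert c {0}))) = ?N - cw_weight c"
    if "c \<in> C" for c
  proof -
    have "cw_weight c = wt {c}"
      unfolding cw_weight_def wt_def Supp_span ..
    moreover have "Supp (sspan (insert c {0})) = Supp {c}"
      unfolding Supp_span by (auto simp: Supp_def)
    ultimately
    show "cw_weight c \<le> ?N" "card (Supp C - Supp (sspan (insert c {0}))) = ?N - cw_weight c"
      using that wt_mono[of "{c}" C] card_Supp_diff[of "{c}" C] by simp_all
  qed
  have zero: "0 \<in> C"
    using C by (rule cs.subspace_0)
  obtain x where "x \<in> Supp C"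
    using False by blast
  moreover have "1 \<le> card {v \<in> C. v x = 0}"
    using zero by (auto simp: Suc_le_eq card_gt_0_iff)
  ultimately have "?q \<le> card C"
    using card_subspace_vanishing[OF C] mult_le_mono2[of 1 _ ?q] by fastforce
  have "(\<Sum>c\<in>C - {0}. card (Supp C - Supp (sspan (insert c {0})))) = (\<Sum>c\<in>C - {0}. ?N - cw_weight c)"
    by (rule sum.cong) (simp_all add: diff)
  moreover have "Supp {0 :: 'n \<Rightarrow> 'a} = {}"
    by (simp add: Supp_def)
  ultimately have "?q * (\<Sum>c\<in>C - {0}. ?N - cw_weight c) = ?N * (card C - ?q)"
    using sum_card_Supp_diff_span_insert[OF C, of "{0}"] zero by (simp flip: wt_def)
  then have "real (?q * (\<Sum>c\<in>C - {0}. ?N - cw_weight c)) = real (?N * (card C - ?q))"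
    by (rule arg_cong)
  then have "real ?q * (\<Sum>c\<in>C - {0}. real (?N - cw_weight c)) = real ?N * (real (card C) - real ?q)"
    using \<open>?q \<le> card C\<close> by (simp add: of_nat_diff)
  also have "(\<Sum>c\<in>C - {0}. real (?N - cw_weight c)) = (real (card C) - 1) * real ?N - ?S"
    using le zero \<open>?q \<le> card C\<close> two_le_card_field[where 'a = 'a]
    by (simp add: of_nat_diff sum_subtractf card_Diff_singleton)
  finally have "real ?q * ?S = real ?N * (real ?q - 1) * real (card C)"
    by (simp add: algebra_simps)
  then have "real (?q * (\<Sum>c\<in>C - {0}. cw_weight c)) = real (?N * (?q - 1) * card C)"
    using two_le_card_field[where 'a = 'a] by (simp add: of_nat_diff)
  then show ?thesis
    by (simp only: of_nat_eq_iff)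
qed

lemma cw_weight_eq_ghw_1:
  fixes C :: "('n::finite \<Rightarrow> 'a::{finite,field}) set"
  defines "Q \<equiv> real (card (UNIV :: 'a set))"
  assumes C: "is_subspace C" and c: "c \<in> C" "c \<noteq> 0"
    and average: "real (ghw C 1) * (Q ^ sdim C - 1) = real (wt C) * (Q ^ (sdim C - 1) * (Q - 1))"
  shows "cw_weight c = ghw C 1"
proof (rule ccontr)
  assume "cw_weight c \<noteq> ghw C 1"
  let ?q = "card (UNIV :: 'a set)" and ?k = "sdim C"
  have "?k \<noteq> 0"
    using c fd.dim_eq_0[of C] by auto
  then have "Q ^ ?k = Q * Q ^ (?k - 1)"
    by (metis power_eq_if)
  then have "real ?q * ((Q ^ ?k - 1) * real (ghw C 1)) = real (wt C) * (Q - 1) * Q ^ ?k"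
    unfolding Q_def[symmetric] average[unfolded mult.commute[of "real (ghw C 1)"]]
    by (simp add: algebra_simps)
  also have "\<dots> = real (wt C * (?q - 1) * card C)"
    using card_subspace[OF C] two_le_card_field[where 'a = 'a] by (simp add: Q_def of_nat_diff)
  also have "\<dots> = real (?q * (\<Sum>c\<in>C - {0}. cw_weight c))"
    by (simp only: sum_cw_weight[OF C])
  finally have "real (\<Sum>c\<in>C - {0}. ghw C 1) = real (\<Sum>c\<in>C - {0}. cw_weight c)"
    using card_subspace[OF C] cs.subspace_0[OF C] two_le_card_field[where 'a = 'a]
    by (simp add: Q_def card_Diff_singleton of_nat_diff)
  then have "(\<Sum>c\<in>C - {0}. ghw C 1) = (\<Sum>c\<in>C - {0}. cw_weight c)"
    by (simp only: of_nat_eq_iff)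
  moreover have "(\<Sum>c\<in>C - {0}. ghw C 1) < (\<Sum>c\<in>C - {0}. cw_weight c)"
  proof (rule sum_strict_mono_ex1)
    have "ghw C 1 < cw_weight c"
      using ghw_1_le_cw_weight[OF C c] \<open>cw_weight c \<noteq> ghw C 1\<close> by simp
    with c show "\<exists>a\<in>C - {0}. ghw C 1 < cw_weight a"
      by blast
  qed (use c ghw_1_le_cw_weight[OF C] in auto)
  ultimately show False
    by simp
qed

lemma ghw_defect_ratio_eq_0_iff:
  fixes C :: "('n::finite \<Rightarrow> 'a::{finite,field}) set"
  defines "Q \<equiv> real (card (UNIV :: 'a set))"
  assumes C: "is_subspace C" and j: "j < sdim C"
  shows "ghw_defect_ratio C j = ghw_defect_ratio C 0
           \<longleftrightarrow> real (ghw C j) * (Q ^ sdim C - 1) = real (wt C) * (Q ^ (sdim C - j) * (Q ^ j - 1))"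
proof -
  let ?k = "sdim C"
  have "2 \<le> Q"
    using two_le_card_field[where 'a = 'a] by (simp add: Q_def)
  then have "1 < Q ^ (?k - j)" "1 < Q ^ ?k"
    using j by (auto intro: one_less_power)
  moreover have "Q ^ ?k = Q ^ (?k - j) * Q ^ j"
    using j by (simp flip: power_add)
  ultimately show ?thesis
    unfolding ghw_defect_ratio_def ghw_0[OF C] Q_def[symmetric]
    by (simp add: divide_simps algebra_simps) (simp add: eq_commute)
qed

theorem proposition1:
  fixes C :: "('n::finite \<Rightarrow> 'a::{finite,field}) set"
    and k i :: nat
  assumes "is_subspace C"
    and "sdim C = k"
    and "1 \<le> i" and "i < k"
    and "real (ghw C k) =
           (real (card (UNIV :: 'a set)) ^ k - 1) / (real (card (UNIV :: 'a set)) ^ (k - i) * (real (card (UNIV :: 'a set)) ^ i - 1))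
             * real (ghw C i)"
  shows "constant_weight_code C \<and>
         (\<forall>c\<in>C. c \<noteq> 0 \<longrightarrow>
            real (cw_weight c) =
              real (ghw C k) * (real (card (UNIV :: 'a set)) ^ (k - 1) * (real (card (UNIV :: 'a set)) - 1))
                / (real (card (UNIV :: 'a set)) ^ k - 1))"
proof -
  note C = assms(1) and k = assms(2)
  let ?Q = "real (card (UNIV :: 'a set))"
  have "2 \<le> ?Q"
    using two_le_card_field[where 'a = 'a] by simp
  then have "1 < ?Q ^ (k - i)" "1 < ?Q ^ i" "1 < ?Q ^ k"
    using assms(3,4) by (auto intro: one_less_power)
  with assms(5) have "real (ghw C i) * (?Q ^ k - 1) = real (wt C) * (?Q ^ (k - i) * (?Q ^ i - 1))"
    using ghw_dim[OF C] k by (simp add: field_simps)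
  then have "ghw_defect_ratio C i = ghw_defect_ratio C 0"
    using ghw_defect_ratio_eq_0_iff[OF C, of i] assms(4) k by simp
  moreover have "ghw_defect_ratio C 0 \<le> ghw_defect_ratio C 1" "ghw_defect_ratio C 1 \<le> ghw_defect_ratio C i"
    using ghw_defect_ratio_mono[OF C] assms(3,4) k by simp_all
  ultimately have "ghw_defect_ratio C 1 = ghw_defect_ratio C 0"
    by simp
  then have average: "real (ghw C 1) * (?Q ^ k - 1) = real (wt C) * (?Q ^ (k - 1) * (?Q - 1))"
    using ghw_defect_ratio_eq_0_iff[OF C, of 1] assms(3,4) k by simp
  have "cw_weight c = ghw C 1" if "c \<in> C" "c \<noteq> 0" for c
    using cw_weight_eq_ghw_1[OF C that] average k by simp
  moreover have "real (ghw C 1) = real (ghw C k) * (?Q ^ (k - 1) * (?Q - 1)) / (?Q ^ k - 1)"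
    using average \<open>1 < ?Q ^ k\<close> ghw_dim[OF C] k by (simp add: field_simps)
  ultimately show ?thesis
    unfolding constant_weight_code_def by auto
qed

end
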